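(* Let $f=[f_k]:\mathbb{R}^n\to\mathbb{R}^n$ and $g_p=[g_{p,k}]:\mathbb{R}^n\to\mathbb{R}^n$, $p\in\{1,\dots,d\}$, be functions, let $\alpha^1,\dots,\alpha^d\in\mathbb{N}^m$, and let $(x^i,\dot x^i,u^i)\in\mathbb{R}^n\times\mathbb{R}^n\times\mathbb{R}^m$ be a data point satisfying $\dot x^i=f(x^i)+\sum_{p=1}^d g_p(x^i)\,u^i[\alpha^p]$. Let $\mathcal{F}^i=[\mathcal{F}^i_k]\in\mathbb{IR}^n$ with $f(x^i)\in\mathcal{F}^i$ and $\mathcal{G}^i=[\mathcal{G}^i_{p,k}]\in\mathbb{IR}^{d\times n}$ with $g_{p,k}(x^i)\in\mathcal{G}^i_{p,k}$ for all $p,k$. For each $k\in\{1,\dots,n\}$ define, using interval arithmetic, $$C_{\mathcal{F}^i_k}=\mathcal{F}^i_k\cap\Big(\dot x^i_k-\sum_{p=1}^d\mathcal{G}^i_{p,k}\,u^i[\alpha^p]\Big),\qquad \mathcal{S}_{0,k}=\big(\dot x^i_k-C_{\mathcal{F}^i_k}\big)\cap\Big(\sum_{p=1}^d\mathcal{G}^i_{p,k}\,u^i[\alpha^p]\Big),$$ and recursively for $p=1,\dots,d$: $$C_{\mathcal{G}^i_{p,k}}=\begin{cases}\Big(\big(\mathcal{S}_{p-1,k}-\sum_{l=p+1}^d\mathcal{G}^i_{l,k}u^i[\alpha^l]\big)\cap\mathcal{G}^i_{p,k}u^i[\alpha^p]\Big)\dfrac{1}{u^i[\alpha^p]}, & \text{if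 } u^i[\alpha^p]\neq0,\\[1ex] \mathcal{G}^i_{p,k}, &\text{otherwise,}\end{cases}$$ $$\mathcal{S}_{p,k}=\big(\mathcal{S}_{p-1,k}-C_{\mathcal{G}^i_{p,k}}u^i[\alpha^p]\big)\cap\Big(\sum_{l=p+1}^d\mathcal{G}^i_{l,k}u^i[\alpha^l]\Big)$$ (an empty sum being $[0,0]$). Then $C_{\mathcal{F}^i}=[C_{\mathcal{F}^i_k}]$ and $C_{\mathcal{G}^i}=[C_{\mathcal{G}^i_{p,k}}]$ are the smallest intervals enclosing $f(x^i)$ and $g_p(x^i)$ given only the data $(x^i,\dot x^i,u^i)$, $\mathcal{F}^i$ and $\mathcal{G}^i$; that is, for every $k$ and $p$, $C_{\mathcal{F}^i_k}$ (resp. $C_{\mathcal{G}^i_{p,k}}$) is exactly the set of values of the $k$-th component of $F$ (resp. the $(p,k)$ entry of $G$) over all pairs $(F,G)\in\mathcal{F}^i\times\mathcal{G}^i$ satisfying $\dot x^i=F+\sum_{p=1}^d G_{p,\cdot}\,u^i[\alpha^p]$, where $G_{p,\cdot}\in\mathbb{R}^n$ is the $p$-th row of $G$.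
   Context: $\mathbb{IR}$ is the set of closed bounded real intervals; $\mathbb{IR}^n$, $\mathbb{IR}^{d\times n}$ are interval vectors/matrices, with intersection and membership componentwise. Operations between intervals and reals are standard interval arithmetic ($\mathcal{A}+\mathcal{B}=\{a+b\}$, $c\mathcal{A}=\{ca\}$, $\mathcal{A}-\mathcal{B}=\{a-b\}$ for $a\in\mathcal{A},b\in\mathcal{B}$), real numbers being identified with degenerate intervals. For $u\in\mathbb{R}^m$ and $\alpha\in\mathbb{N}^m$, $u[\alpha]=u_1^{\alpha_1}\cdots u_m^{\alpha_m}$. *)

theory Defs
  imports "HOL-Analysis.Analysis"
begin

text \<open>Closed bounded real intervals are represented as sets of reals; interval
  arithmetic is the set-wise (Minkowski) arithmetic, reals being identified with
  degenerate intervals (singletons).\<close>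

definition is_cinterval :: "real set \<Rightarrow> bool" where
  "is_cinterval A \<longleftrightarrow> (\<exists>a b. a \<le> b \<and> A = {a..b})"

definition iadd :: "real set \<Rightarrow> real set \<Rightarrow> real set" where
  "iadd A B = {a + b | a b. a \<in> A \<and> b \<in> B}"

definition isub :: "real set \<Rightarrow> real set \<Rightarrow> real set" where
  "isub A B = {a - b | a b. a \<in> A \<and> b \<in> B}"

definition iscale :: "real \<Rightarrow> real set \<Rightarrow> real set" where
  "iscale c A = {c * a | a. a \<in> A}"

fun isum_list :: "real set list \<Rightarrow> real set" where
  "isum_list [] = {0}"
| "isum_list (A # As) = iadd A (isum_list As)"

definition monom :: "real ^ 'm \<Rightarrow> ('m \<Rightarrow> nat) \<Rightarrow> real" where
  "monom u \<alpha> = (\<Prod>j\<in>UNIV. (u $ j) ^ (\<alpha> j))"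

definition gsum :: "(nat \<Rightarrow> 'n \<Rightarrow> real set) \<Rightarrow> real ^ 'm \<Rightarrow> (nat \<Rightarrow> 'm \<Rightarrow> nat)
    \<Rightarrow> nat \<Rightarrow> 'n \<Rightarrow> nat \<Rightarrow> real set" where
  "gsum GG u \<alpha> d k p = isum_list (map (\<lambda>l. iscale (monom u (\<alpha> l)) (GG l k)) [Suc p..<Suc d])"

definition CF :: "('n \<Rightarrow> real set) \<Rightarrow> (nat \<Rightarrow> 'n \<Rightarrow> real set) \<Rightarrow> real ^ 'n \<Rightarrow> real ^ 'm
    \<Rightarrow> (nat \<Rightarrow> 'm \<Rightarrow> nat) \<Rightarrow> nat \<Rightarrow> 'n \<Rightarrow> real set" where
  "CF FF GG xd u \<alpha> d k = FF k \<inter> isub {xd $ k} (gsum GG u \<alpha> d k 0)"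

definition CGstep :: "real set \<Rightarrow> (nat \<Rightarrow> 'n \<Rightarrow> real set) \<Rightarrow> real ^ 'm
    \<Rightarrow> (nat \<Rightarrow> 'm \<Rightarrow> nat) \<Rightarrow> nat \<Rightarrow> nat \<Rightarrow> 'n \<Rightarrow> real set" where
  "CGstep Sprev GG u \<alpha> d p k =
     (if monom u (\<alpha> p) \<noteq> 0
      then iscale (1 / monom u (\<alpha> p))
             (isub Sprev (gsum GG u \<alpha> d k p) \<inter> iscale (monom u (\<alpha> p)) (GG p k))
      else GG p k)"

fun S :: "('n \<Rightarrow> real set) \<Rightarrow> (nat \<Rightarrow> 'n \<Rightarrow> real set) \<Rightarrow> real ^ 'n \<Rightarrow> real ^ 'm
    \<Rightarrow> (nat \<Rightarrow> 'm \<Rightarrow> nat) \<Rightarrow> nat \<Rightarrow> nat \<Rightarrow> 'n \<Rightarrow> real set" where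
  "S FF GG xd u \<alpha> d 0 k =
     isub {xd $ k} (CF FF GG xd u \<alpha> d k) \<inter> gsum GG u \<alpha> d k 0"
| "S FF GG xd u \<alpha> d (Suc p) k =
     isub (S FF GG xd u \<alpha> d p k)
          (iscale (monom u (\<alpha> (Suc p))) (CGstep (S FF GG xd u \<alpha> d p k) GG u \<alpha> d (Suc p) k))
     \<inter> gsum GG u \<alpha> d k (Suc p)"

definition CG :: "('n \<Rightarrow> real set) \<Rightarrow> (nat \<Rightarrow> 'n \<Rightarrow> real set) \<Rightarrow> real ^ 'n \<Rightarrow> real ^ 'm
    \<Rightarrow> (nat \<Rightarrow> 'm \<Rightarrow> nat) \<Rightarrow> nat \<Rightarrow> nat \<Rightarrow> 'n \<Rightarrow> real set" where
  "CG FF GG xd u \<alpha> d p k = CGstep (S FF GG xd u \<alpha> d (p - 1) k) GG u \<alpha> d p k"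

end

theory Submission
  imports Defs
begin

text \<open>The constraint \<open>xd = F + (\<Sum>p. u[\<alpha>\<^sup>p] G\<^sub>p)\<close> decouples over the components \<open>k\<close>;
  for fixed \<open>k\<close> it is the single linear equation \<open>xd\<^sub>k = F\<^sub>0 + (\<Sum>l. c\<^sub>l h\<^sub>l)\<close> with box
  constraints on \<open>F\<^sub>0\<close> and the \<open>h\<^sub>l\<close>. By induction on \<open>p\<close>, \<open>S\<^sub>p\<close> is exactly the set of
  values of the tail \<open>\<Sum>l>p. c\<^sub>l h\<^sub>l\<close> over the feasible points, and \<open>C\<^sub>G\<^sub>p\<close> peels off
  its first term. The single idea is an exchange argument: any box-admissible tail with
  the same value can be spliced onto a feasible point. Nonemptiness of the feasible set,
  provided by the data point, is needed when \<open>u[\<alpha>\<^sup>p] = 0\<close>, where \<open>C\<^sub>G\<^sub>p\<close> is the given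
  enclosure itself.
  The identities hold for arbitrary sets.\<close>

lemma isum_list_map_iscale:
  "distinct xs \<Longrightarrow> isum_list (map (\<lambda>l. iscale (c l) (A l)) xs)
     = {\<Sum>l\<in>set xs. c l * h l | h. \<forall>l\<in>set xs. h l \<in> A l}"
proof (induction xs)
  case Nil
  then show ?case by auto
next
  case (Cons a xs)
  have "iadd (iscale (c a) (A a)) {\<Sum>l\<in>set xs. c l * h l | h. \<forall>l\<in>set xs. h l \<in> A l}
     = {\<Sum>l\<in>set (a # xs). c l * h l | h. \<forall>l\<in>set (a # xs). h l \<in> A l}"
  proof (intro set_eqI iffI)
    fix z assume "z \<in> iadd (iscale (c a) (A a)) {\<Sum>l\<in>set xs. c l * h l | h. \<forall>l\<in>set xs. h l \<in> A l}"
    then obtain y h where y: "y \<in> A a" and h: "\<forall>l\<in>set xs. h l \<in> A l"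
      and z: "z = c a * y + (\<Sum>l\<in>set xs. c l * h l)"
      unfolding iadd_def iscale_def by blast
    have "(\<Sum>l\<in>set xs. c l * (h(a := y)) l) = (\<Sum>l\<in>set xs. c l * h l)"
      using Cons.prems by (intro sum.cong) auto
    then have "z = (\<Sum>l\<in>set (a # xs). c l * (h(a := y)) l)"
      using z Cons.prems by simp
    moreover have "\<forall>l\<in>set (a # xs). (h(a := y)) l \<in> A l" using y h by auto
    ultimately show "z \<in> {\<Sum>l\<in>set (a # xs). c l * h l | h. \<forall>l\<in>set (a # xs). h l \<in> A l}"
      by blast
  next
    fix z assume "z \<in> {\<Sum>l\<in>set (a # xs). c l * h l | h. \<forall>l\<in>set (a # xs). h l \<in> A l}"
    then obtain h where h: "\<forall>l\<in>set (a # xs). h l \<in> A l"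
      and "z = (\<Sum>l\<in>set (a # xs). c l * h l)" by blast
    then have "z = c a * h a + (\<Sum>l\<in>set xs. c l * h l)" using Cons.prems by simp
    then show "z \<in> iadd (iscale (c a) (A a)) {\<Sum>l\<in>set xs. c l * h l | h. \<forall>l\<in>set xs. h l \<in> A l}"
      unfolding iadd_def iscale_def using h by auto
  qed
  with Cons show ?case by simp
qed

context
  fixes FF :: "'n::finite \<Rightarrow> real set" and GG :: "nat \<Rightarrow> 'n \<Rightarrow> real set"
    and xd :: "real ^ 'n" and u :: "real ^ 'm::finite" and \<alpha> :: "nat \<Rightarrow> 'm \<Rightarrow> nat"
    and d :: nat and k :: 'n
begin

definition tail_sum :: "nat \<Rightarrow> (nat \<Rightarrow> real) \<Rightarrow> real" where
  "tail_sum q h = (\<Sum>l\<in>{Suc q..d}. monom u (\<alpha> l) * h l)"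

definition feasible :: "real \<Rightarrow> (nat \<Rightarrow> real) \<Rightarrow> bool" where
  "feasible F0 h \<longleftrightarrow> F0 \<in> FF k \<and> (\<forall>l\<in>{1..d}. h l \<in> GG l k) \<and> xd $ k = F0 + tail_sum 0 h"

lemma gsum_eq: "gsum GG u \<alpha> d k q = {tail_sum q h | h. \<forall>l\<in>{Suc q..d}. h l \<in> GG l k}"
proof -
  have "set [Suc q..<Suc d] = {Suc q..d}" by auto
  then show ?thesis unfolding gsum_def tail_sum_def by (subst isum_list_map_iscale) simp_all
qed

lemma tail_sum_Suc:
  "q < d \<Longrightarrow> tail_sum q h = monom u (\<alpha> (Suc q)) * h (Suc q) + tail_sum (Suc q) h"
  unfolding tail_sum_def by (simp add: sum.atLeast_Suc_atMost)

lemma tail_sum_cong: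
  "(\<And>l. Suc q \<le> l \<Longrightarrow> l \<le> d \<Longrightarrow> h l = h' l) \<Longrightarrow> tail_sum q h = tail_sum q h'"
  unfolding tail_sum_def by (intro sum.cong) auto

lemma feasible_splice:
  assumes "feasible F0 h" and "\<forall>l\<in>{Suc q..d}. h' l \<in> GG l k"
    and "tail_sum q h' = tail_sum q h"
  shows "feasible F0 (\<lambda>l. if l \<le> q then h l else h' l)"
proof -
  let ?h = "\<lambda>l. if l \<le> q then h l else h' l"
  have split: "tail_sum 0 v = (\<Sum>l\<in>{1..min q d}. monom u (\<alpha> l) * v l) + tail_sum q v" for v
  proof -
    have "tail_sum 0 v = (\<Sum>l\<in>{1..min q d} \<union> {Suc q..d}. monom u (\<alpha> l) * v l)"
      unfolding tail_sum_def by (rule sum.cong) auto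
    also have "\<dots> = (\<Sum>l\<in>{1..min q d}. monom u (\<alpha> l) * v l) + tail_sum q v"
      unfolding tail_sum_def by (rule sum.union_disjoint) auto
    finally show ?thesis .
  qed
  have "tail_sum 0 ?h = tail_sum 0 h"
    using assms(3) tail_sum_cong[of q ?h h'] by (simp add: split)
  then show ?thesis using assms(1,2) unfolding feasible_def by auto
qed

lemma feasible_exchange:
  assumes feas: "feasible F0 h" and "q < d" and g: "g \<in> GG (Suc q) k"
    and h': "\<forall>l\<in>{Suc (Suc q)..d}. h' l \<in> GG l k"
    and sum: "monom u (\<alpha> (Suc q)) * g + tail_sum (Suc q) h' = tail_sum q h"
  obtains h'' where "feasible F0 h''" "h'' (Suc q) = g"
    "tail_sum (Suc q) h'' = tail_sum (Suc q) h'"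
proof
  let ?v = "h'(Suc q := g)"
  have "tail_sum (Suc q) ?v = tail_sum (Suc q) h'" by (rule tail_sum_cong) simp
  then have "tail_sum q ?v = tail_sum q h" using sum tail_sum_Suc[OF \<open>q < d\<close>] by simp
  moreover have "\<forall>l\<in>{Suc q..d}. ?v l \<in> GG l k" using g h' by (auto simp: Suc_le_eq)
  ultimately show "feasible F0 (\<lambda>l. if l \<le> q then h l else ?v l)"
    using feasible_splice[OF feas] by blast
  show "tail_sum (Suc q) (\<lambda>l. if l \<le> q then h l else ?v l) = tail_sum (Suc q) h'"
    by (rule tail_sum_cong) auto
  show "(\<lambda>l. if l \<le> q then h l else ?v l) (Suc q) = g" by simp
qed

lemma CF_eq: "CF FF GG xd u \<alpha> d k = {F0 | F0 h. feasible F0 h}"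
  unfolding CF_def gsum_eq isub_def feasible_def
  by (auto simp: Suc_le_eq)

lemma S_0_eq: "S FF GG xd u \<alpha> d 0 k = {tail_sum 0 h | F0 h. feasible F0 h}"
  unfolding S.simps CF_eq gsum_eq isub_def feasible_def
  by (auto simp: Suc_le_eq) force+

lemma CGstep_eq:
  assumes "q < d"
    and S_q: "S FF GG xd u \<alpha> d q k = {tail_sum q h | F0 h. feasible F0 h}"
    and feas: "feasible F1 h1"
  shows "CGstep (S FF GG xd u \<alpha> d q k) GG u \<alpha> d (Suc q) k = {h (Suc q) | F0 h. feasible F0 h}"
    (is "?C = ?P")
proof (cases "monom u (\<alpha> (Suc q)) = 0")
  case True
  have "g \<in> ?P" if g: "g \<in> GG (Suc q) k" for g
  proof -
    have "monom u (\<alpha> (Suc q)) * g + tail_sum (Suc q) h1 = tail_sum q h1"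
      using True tail_sum_Suc[OF \<open>q < d\<close>] by simp
    moreover have "\<forall>l\<in>{Suc (Suc q)..d}. h1 l \<in> GG l k" using feas unfolding feasible_def by simp
    ultimately obtain h'' where "feasible F1 h''" "h'' (Suc q) = g"
      using feasible_exchange[OF feas \<open>q < d\<close> g] by blast
    then show ?thesis by blast
  qed
  moreover have "?P \<subseteq> GG (Suc q) k" using \<open>q < d\<close> unfolding feasible_def by auto
  ultimately show ?thesis using True unfolding CGstep_def by auto
next
  case False
  let ?c = "monom u (\<alpha> (Suc q))"
  have C: "?C = iscale (1 / ?c) (isub (S FF GG xd u \<alpha> d q k) (gsum GG u \<alpha> d k (Suc q))
                                 \<inter> iscale ?c (GG (Suc q) k))"
    unfolding CGstep_def using False by simp
  show ?thesis
  proof (intro set_eqI iffI)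
    fix z assume "z \<in> ?C"
    then obtain w g where w: "w \<in> isub (S FF GG xd u \<alpha> d q k) (gsum GG u \<alpha> d k (Suc q))"
      and g: "g \<in> GG (Suc q) k" and "w = ?c * g" "z = 1 / ?c * w"
      unfolding C iscale_def by blast
    then have "z = g" using False by simp
    from w obtain s t where s: "s \<in> S FF GG xd u \<alpha> d q k" and t: "t \<in> gsum GG u \<alpha> d k (Suc q)"
      and "?c * g = s - t"
      unfolding isub_def \<open>w = ?c * g\<close> by blast
    from s obtain F0 h where feas: "feasible F0 h" and "s = tail_sum q h"
      unfolding S_q by blast
    from t obtain h' where h': "\<forall>l\<in>{Suc (Suc q)..d}. h' l \<in> GG l k" and "t = tail_sum (Suc q) h'"
      unfolding gsum_eq by blast
    have "?c * g + tail_sum (Suc q) h' = tail_sum q h"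
      using \<open>?c * g = s - t\<close> \<open>s = tail_sum q h\<close> \<open>t = tail_sum (Suc q) h'\<close> by simp
    then obtain h'' where "feasible F0 h''" "h'' (Suc q) = g"
      using feasible_exchange[OF feas \<open>q < d\<close> g h'] by blast
    with \<open>z = g\<close> show "z \<in> ?P" by blast
  next
    fix z assume "z \<in> ?P"
    then obtain F0 h where feas: "feasible F0 h" and z: "z = h (Suc q)" by blast
    have "?c * z = tail_sum q h - tail_sum (Suc q) h"
      using z tail_sum_Suc[OF \<open>q < d\<close>] by simp
    moreover have "tail_sum q h \<in> S FF GG xd u \<alpha> d q k" unfolding S_q using feas by blast
    moreover have "tail_sum (Suc q) h \<in> gsum GG u \<alpha> d k (Suc q)"
      unfolding gsum_eq using feas unfolding feasible_def by force
    moreover have "z \<in> GG (Suc q) k" using feas z \<open>q < d\<close> unfolding feasible_def by simp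
    ultimately have "?c * z \<in> isub (S FF GG xd u \<alpha> d q k) (gsum GG u \<alpha> d k (Suc q))
                              \<inter> iscale ?c (GG (Suc q) k)"
      unfolding isub_def iscale_def by blast
    then show "z \<in> ?C" using False unfolding C iscale_def by force
  qed
qed

lemma S_Suc_eq:
  assumes "q < d"
    and S_q: "S FF GG xd u \<alpha> d q k = {tail_sum q h | F0 h. feasible F0 h}"
    and feas: "feasible F1 h1"
  shows "S FF GG xd u \<alpha> d (Suc q) k = {tail_sum (Suc q) h | F0 h. feasible F0 h}"
    (is "?S = ?T")
proof -
  let ?c = "monom u (\<alpha> (Suc q))"
  have S: "?S = isub (S FF GG xd u \<alpha> d q k) (iscale ?c {h (Suc q) | F0 h. feasible F0 h})
                \<inter> gsum GG u \<alpha> d k (Suc q)"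
    using CGstep_eq[OF assms] by simp
  show ?thesis
  proof (intro set_eqI iffI)
    fix t assume "t \<in> ?S"
    then obtain s F1' h1' h' where s: "s \<in> S FF GG xd u \<alpha> d q k" and feas1: "feasible F1' h1'"
      and h': "\<forall>l\<in>{Suc (Suc q)..d}. h' l \<in> GG l k"
      and "t = s - ?c * h1' (Suc q)" "t = tail_sum (Suc q) h'"
      unfolding S isub_def iscale_def gsum_eq by blast
    from s obtain F0 h where feas: "feasible F0 h" and "s = tail_sum q h"
      unfolding S_q by blast
    have "h1' (Suc q) \<in> GG (Suc q) k"
      using feas1 \<open>q < d\<close> unfolding feasible_def by simp
    moreover have "?c * h1' (Suc q) + tail_sum (Suc q) h' = tail_sum q h"
      using \<open>t = s - ?c * h1' (Suc q)\<close> \<open>t = tail_sum (Suc q) h'\<close> \<open>s = tail_sum q h\<close> by simp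
    ultimately obtain h'' where "feasible F0 h''" "tail_sum (Suc q) h'' = t"
      using feasible_exchange[OF feas \<open>q < d\<close> _ h'] \<open>t = tail_sum (Suc q) h'\<close> by metis
    then show "t \<in> ?T" by blast
  next
    fix t assume "t \<in> ?T"
    then obtain F0 h where feas: "feasible F0 h" and t: "t = tail_sum (Suc q) h" by blast
    have "t = tail_sum q h - ?c * h (Suc q)" using t tail_sum_Suc[OF \<open>q < d\<close>] by simp
    moreover have "tail_sum q h \<in> S FF GG xd u \<alpha> d q k" unfolding S_q using feas by blast
    moreover have "t \<in> gsum GG u \<alpha> d k (Suc q)"
      unfolding gsum_eq t using feas unfolding feasible_def by force
    ultimately show "t \<in> ?S" unfolding S isub_def iscale_def using feas by blast
  qed
qed

lemma S_eq:
  assumes "feasible F1 h1" and "q \<le> d"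
  shows "S FF GG xd u \<alpha> d q k = {tail_sum q h | F0 h. feasible F0 h}"
  using \<open>q \<le> d\<close>
proof (induction q)
  case 0
  show ?case by (rule S_0_eq)
next
  case (Suc q)
  then show ?case using S_Suc_eq[OF _ _ assms(1)] by simp
qed

lemma CG_eq:
  assumes "feasible F1 h1" and "p \<in> {1..d}"
  shows "CG FF GG xd u \<alpha> d p k = {h p | F0 h. feasible F0 h}"
proof -
  obtain q where "p = Suc q" "q < d" using assms(2) by (cases p) auto
  then show ?thesis
    unfolding CG_def using CGstep_eq[OF _ S_eq[OF assms(1)] assms(1)] by simp
qed

end

lemma feasible_of_solution:
  fixes F :: "real ^ 'n::finite" and G :: "nat \<Rightarrow> real ^ 'n"
  assumes "\<forall>k'. F $ k' \<in> FF k'" "\<forall>p\<in>{1..d}. \<forall>k'. G p $ k' \<in> GG p k'"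
    and "xd = F + (\<Sum>p\<in>{1..d}. monom u (\<alpha> p) *\<^sub>R G p)"
  shows "feasible FF GG xd u \<alpha> d k (F $ k) (\<lambda>l. G l $ k)"
  using assms unfolding feasible_def tail_sum_def by simp

text \<open>A componentwise feasible point is completed to a full solution by the other
  components of a given solution.\<close>

lemma solution_components_eq:
  fixes F' :: "real ^ 'n::finite" and G' :: "nat \<Rightarrow> real ^ 'n"
  assumes sol: "\<forall>k'. F' $ k' \<in> FF k'" "\<forall>p\<in>{1..d}. \<forall>k'. G' p $ k' \<in> GG p k'"
    "xd = F' + (\<Sum>p\<in>{1..d}. monom u (\<alpha> p) *\<^sub>R G' p)"
  shows "{\<Phi> (F $ k) (\<lambda>l. G l $ k) | F G. (\<forall>k'. F $ k' \<in> FF k')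
            \<and> (\<forall>p\<in>{1..d}. \<forall>k'. G p $ k' \<in> GG p k')
            \<and> xd = F + (\<Sum>p\<in>{1..d}. monom u (\<alpha> p) *\<^sub>R G p)}
       = {\<Phi> F0 h | F0 h. feasible FF GG xd u \<alpha> d k F0 h}"
proof (intro set_eqI iffI)
  fix z assume "z \<in> {\<Phi> F0 h | F0 h. feasible FF GG xd u \<alpha> d k F0 h}"
  then obtain F0 h where feas: "feasible FF GG xd u \<alpha> d k F0 h" and z: "z = \<Phi> F0 h" by blast
  define F where "F = (\<chi> k'. if k' = k then F0 else F' $ k')"
  define G where "G = (\<lambda>l. \<chi> k'. if k' = k then h l else G' l $ k')"
  have "xd = F + (\<Sum>p\<in>{1..d}. monom u (\<alpha> p) *\<^sub>R G p)"
    using feas sol(3) unfolding feasible_def tail_sum_def F_def G_def by (auto simp: vec_eq_iff)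
  moreover have "\<forall>k'. F $ k' \<in> FF k'" "\<forall>p\<in>{1..d}. \<forall>k'. G p $ k' \<in> GG p k'"
    using feas sol(1,2) unfolding feasible_def F_def G_def by auto
  moreover have "z = \<Phi> (F $ k) (\<lambda>l. G l $ k)" unfolding z F_def G_def by simp
  ultimately show "z \<in> {\<Phi> (F $ k) (\<lambda>l. G l $ k) | F G. (\<forall>k'. F $ k' \<in> FF k')
            \<and> (\<forall>p\<in>{1..d}. \<forall>k'. G p $ k' \<in> GG p k')
            \<and> xd = F + (\<Sum>p\<in>{1..d}. monom u (\<alpha> p) *\<^sub>R G p)}" by blast
qed (use feasible_of_solution in blast)

theorem lemma2:
  fixes f :: "real ^ ('n::finite) \<Rightarrow> real ^ 'n"
    and g :: "nat \<Rightarrow> real ^ ('n::finite) \<Rightarrow> real ^ 'n"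
    and alpha :: "nat \<Rightarrow> ('m::finite) \<Rightarrow> nat"
    and x xd :: "real ^ 'n"
    and u :: "real ^ 'm"
    and d :: nat
    and FF :: "'n \<Rightarrow> real set"
    and GG :: "nat \<Rightarrow> 'n \<Rightarrow> real set"
  assumes data: "xd = f x + (\<Sum>p\<in>{1..d}. monom u (alpha p) *\<^sub>R g p x)"
    and FF_int: "\<forall>k. is_cinterval (FF k)"
    and f_in: "\<forall>k. f x $ k \<in> FF k"
    and GG_int: "\<forall>p\<in>{1..d}. \<forall>k. is_cinterval (GG p k)"
    and g_in: "\<forall>p\<in>{1..d}. \<forall>k. g p x $ k \<in> GG p k"
  shows "(\<forall>k. CF FF GG xd u alpha d k =
            {F $ k | F G. (\<forall>k'. F $ k' \<in> FF k') \<and> (\<forall>p\<in>{1..d}. \<forall>k'. G p $ k' \<in> GG p k')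
                          \<and> xd = F + (\<Sum>p\<in>{1..d}. monom u (alpha p) *\<^sub>R G p)})
       \<and> (\<forall>p\<in>{1..d}. \<forall>k. CG FF GG xd u alpha d p k =
            {G p $ k | F G. (\<forall>k'. F $ k' \<in> FF k') \<and> (\<forall>q\<in>{1..d}. \<forall>k'. G q $ k' \<in> GG q k')
                          \<and> xd = F + (\<Sum>q\<in>{1..d}. monom u (alpha q) *\<^sub>R G q)})"
proof (intro conjI allI ballI)
  note components = solution_components_eq[OF f_in g_in data]
  have feas: "feasible FF GG xd u alpha d k (f x $ k) (\<lambda>l. g l x $ k)" for k
    using feasible_of_solution[OF f_in g_in data] .
  show "CF FF GG xd u alpha d k =
          {F $ k | F G. (\<forall>k'. F $ k' \<in> FF k') \<and> (\<forall>p\<in>{1..d}. \<forall>k'. G p $ k' \<in> GG p k')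
                        \<and> xd = F + (\<Sum>p\<in>{1..d}. monom u (alpha p) *\<^sub>R G p)}" for k
    using components[of "\<lambda>F0 h. F0" k] by (simp add: CF_eq)
  show "CG FF GG xd u alpha d p k =
          {G p $ k | F G. (\<forall>k'. F $ k' \<in> FF k') \<and> (\<forall>q\<in>{1..d}. \<forall>k'. G q $ k' \<in> GG q k')
                        \<and> xd = F + (\<Sum>q\<in>{1..d}. monom u (alpha q) *\<^sub>R G q)}"
    if "p \<in> {1..d}" for p k
    using components[of "\<lambda>F0 h. h p" k] by (simp add: CG_eq[OF feas that])
qed

end
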